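(* Let $X$ be a finite set and let $c$ be a choice correspondence on $X$ that admits a minimal compromise representation. Then $c$ satisfies axiom $\beta$: for all $x,y\in X$ and menus $A\subset B$, if $x,y\in A$, $x,y\in c(A)$ and $y\in c(B)$, then $x\in c(B)$. However, $c$ need not satisfy axiom $\alpha$: there exists a choice correspondence admitting a minimal compromise representation and menus $B\subset A$ and $x\in B$ with $x\in c(A)$ but $x\notin c(B)$.
   Context: A menu is a nonempty subset of $X$. A choice correspondence is a map $c$ assigning to each menu $A$ a nonempty subset $c(A)\subseteq A$. A weak order is a complete and transitive binary relation on $X$; a linear order is an antisymmetric weak order. For a weak order $R$ and menu $A$, $\max(A,R)=\{x\in A: xRy \text{ for all } y\in A\}$. For a linear order $L$, $\min(A,L)$ denotes the unique $x\in A$ with $yLx$ for all $y\in A$. A choice correspondence $c$ admits a minimal compromise representation if there exist a weak order $R$ and a linear order $L$ on $X$ such that for every menu $A$: $c(A)=\max(A,R)$ if $\max(A,R)$ is a singleton, and $c(A)=\max(A,R)\setminus\{\min(\max(A,R),L)\}$ otherwise. *)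

theory Defs
  imports Main
begin

(* The ground set X is a carrier set X :: 'a set; relations are predicates on 'a,
   only their behaviour on X matters. *)

definition menu :: "'a set \<Rightarrow> 'a set \<Rightarrow> bool" where
  "menu X A \<longleftrightarrow> A \<noteq> {} \<and> A \<subseteq> X"

definition choice_corr :: "'a set \<Rightarrow> ('a set \<Rightarrow> 'a set) \<Rightarrow> bool" where
  "choice_corr X c \<longleftrightarrow> (\<forall>A. menu X A \<longrightarrow> c A \<noteq> {} \<and> c A \<subseteq> A)"

definition weak_order :: "'a set \<Rightarrow> ('a \<Rightarrow> 'a \<Rightarrow> bool) \<Rightarrow> bool" where
  "weak_order X R \<longleftrightarrow>
     (\<forall>x\<in>X. \<forall>y\<in>X. R x y \<or> R y x) \<and>
     (\<forall>x\<in>X. \<forall>y\<in>X. \<forall>z\<in>X. R x y \<longrightarrow> R y z \<longrightarrow> R x z)"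

definition linear_order_on' :: "'a set \<Rightarrow> ('a \<Rightarrow> 'a \<Rightarrow> bool) \<Rightarrow> bool" where
  "linear_order_on' X L \<longleftrightarrow> weak_order X L \<and>
     (\<forall>x\<in>X. \<forall>y\<in>X. L x y \<longrightarrow> L y x \<longrightarrow> x = y)"

definition maxR :: "'a set \<Rightarrow> ('a \<Rightarrow> 'a \<Rightarrow> bool) \<Rightarrow> 'a set" where
  "maxR A R = {x\<in>A. \<forall>y\<in>A. R x y}"

definition minL :: "'a set \<Rightarrow> ('a \<Rightarrow> 'a \<Rightarrow> bool) \<Rightarrow> 'a" where
  "minL A L = (THE x. x \<in> A \<and> (\<forall>y\<in>A. L y x))"

definition minimal_compromise_rep :: "'a set \<Rightarrow> ('a set \<Rightarrow> 'a set) \<Rightarrow> bool" where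
  "minimal_compromise_rep X c \<longleftrightarrow>
     (\<exists>R L. weak_order X R \<and> linear_order_on' X L \<and>
        (\<forall>A. menu X A \<longrightarrow>
           c A = (if (\<exists>x. maxR A R = {x}) then maxR A R
                  else maxR A R - {minL (maxR A R) L})))"

definition axiom_beta :: "'a set \<Rightarrow> ('a set \<Rightarrow> 'a set) \<Rightarrow> bool" where
  "axiom_beta X c \<longleftrightarrow>
     (\<forall>x\<in>X. \<forall>y\<in>X. \<forall>A B. menu X A \<longrightarrow> menu X B \<longrightarrow> A \<subset> B \<longrightarrow>
        x \<in> A \<longrightarrow> y \<in> A \<longrightarrow> x \<in> c A \<longrightarrow> y \<in> c A \<longrightarrow> y \<in> c B \<longrightarrow> x \<in> c B)"

definition axiom_alpha :: "'a set \<Rightarrow> ('a set \<Rightarrow> 'a set) \<Rightarrow> bool" where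
  "axiom_alpha X c \<longleftrightarrow>
     (\<forall>A B x. menu X A \<longrightarrow> menu X B \<longrightarrow> B \<subset> A \<longrightarrow> x \<in> B \<longrightarrow> x \<in> c A \<longrightarrow> x \<in> c B)"

end

theory Submission
  imports Defs
begin

text \<open>Axiom \<beta>: if \<open>y\<close> survives in \<open>B\<close>, it is \<open>R\<close>-maximal in \<open>B\<close>, so every
  \<open>R\<close>-maximal element of the submenu \<open>A \<ni> y\<close> is \<open>R\<close>-maximal in \<open>B\<close>. Hence a
  chosen \<open>x\<close> of \<open>A\<close> is \<open>R\<close>-maximal in \<open>B\<close>, and it could only be rejected there as
  the \<open>L\<close>-minimum of the maximal elements of \<open>B\<close>; but then it is also the \<open>L\<close>-minimum
  of the maximal elements of \<open>A\<close>, and being chosen in \<open>A\<close> it must be the unique one,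
  which forces \<open>x = y\<close>. Axiom \<alpha> fails already under total indifference: removing the
  \<open>L\<close>-minimal item from a menu makes the next one the rejected compromise.\<close>

definition compromise :: "('a \<Rightarrow> 'a \<Rightarrow> bool) \<Rightarrow> ('a \<Rightarrow> 'a \<Rightarrow> bool) \<Rightarrow> 'a set \<Rightarrow> 'a set" where
  "compromise R L A =
     (if \<exists>x. maxR A R = {x} then maxR A R else maxR A R - {minL (maxR A R) L})"

lemma minimal_compromise_rep_iff:
  "minimal_compromise_rep X c \<longleftrightarrow>
     (\<exists>R L. weak_order X R \<and> linear_order_on' X L \<and>
        (\<forall>A. menu X A \<longrightarrow> c A = compromise R L A))"
  unfolding minimal_compromise_rep_def compromise_def ..

lemma minimal_compromise_rep_compromise:
  assumes "weak_order X R" "linear_order_on' X L"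
  shows "minimal_compromise_rep X (compromise R L)"
  unfolding minimal_compromise_rep_iff using assms by blast

lemma maxR_subset: "maxR A R \<subseteq> A"
  unfolding maxR_def by blast

lemma weak_order_total: "weak_order X R \<Longrightarrow> x \<in> X \<Longrightarrow> y \<in> X \<Longrightarrow> R x y \<or> R y x"
  unfolding weak_order_def by blast

lemma weak_order_trans:
  "weak_order X R \<Longrightarrow> x \<in> X \<Longrightarrow> y \<in> X \<Longrightarrow> z \<in> X \<Longrightarrow> R x y \<Longrightarrow> R y z \<Longrightarrow> R x z"
  unfolding weak_order_def by blast

lemma weak_order_converse: "weak_order X R \<Longrightarrow> weak_order X (\<lambda>x y. R y x)"
  unfolding weak_order_def by blast

lemma maxR_nonempty:
  assumes R: "weak_order X R" and "finite A" "A \<noteq> {}" "A \<subseteq> X"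
  shows "maxR A R \<noteq> {}"
  using assms(2-4)
proof (induction A rule: finite_ne_induct)
  case (singleton x)
  then have "R x x" using weak_order_total[OF R] by blast
  then show ?case unfolding maxR_def by auto
next
  case (insert a F)
  then obtain m where m: "m \<in> F" "\<forall>y\<in>F. R m y" unfolding maxR_def by blast
  have "a \<in> X" "m \<in> X" "F \<subseteq> X" using insert.prems m by auto
  consider "R a m" | "R m a" using weak_order_total[OF R \<open>a \<in> X\<close> \<open>m \<in> X\<close>] by blast
  then show ?case
  proof cases
    case 1
    have "R a y" if "y \<in> F" for y
      using weak_order_trans[OF R \<open>a \<in> X\<close> \<open>m \<in> X\<close>] 1 m that \<open>F \<subseteq> X\<close> by blast
    moreover have "R a a" using weak_order_total[OF R \<open>a \<in> X\<close> \<open>a \<in> X\<close>] by blast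
    ultimately have "a \<in> maxR (insert a F) R" unfolding maxR_def by blast
    then show ?thesis by blast
  next
    case 2
    then have "m \<in> maxR (insert a F) R" using m unfolding maxR_def by blast
    then show ?thesis by blast
  qed
qed

lemma minL_eqI:
  assumes "linear_order_on' X L" "S \<subseteq> X" "x \<in> S" "\<forall>y\<in>S. L y x"
  shows "minL S L = x"
  unfolding minL_def
proof (rule the_equality)
  show "x \<in> S \<and> (\<forall>y\<in>S. L y x)" using assms by blast
  show "z = x" if "z \<in> S \<and> (\<forall>y\<in>S. L y z)" for z
    using that assms unfolding linear_order_on'_def by blast
qed

lemma minL_least:
  assumes "linear_order_on' X L" "finite S" "S \<noteq> {}" "S \<subseteq> X"
  shows "minL S L \<in> S" "\<forall>y\<in>S. L y (minL S L)"
proof -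
  have "weak_order X (\<lambda>x y. L y x)"
    using assms(1) weak_order_converse unfolding linear_order_on'_def by blast
  then obtain x where "x \<in> maxR S (\<lambda>x y. L y x)"
    using maxR_nonempty assms(2-4) by blast
  then have "x \<in> S" "\<forall>y\<in>S. L y x" unfolding maxR_def by auto
  with minL_eqI[OF assms(1,4)] show "minL S L \<in> S" "\<forall>y\<in>S. L y (minL S L)" by auto
qed

lemma minL_subset_eq:
  assumes "linear_order_on' X L" "finite S" "S \<subseteq> X" "T \<subseteq> S" "minL S L \<in> T"
  shows "minL T L = minL S L"
  using minL_least[OF assms(1-2) _ assms(3)] assms by (intro minL_eqI[OF assms(1)]) auto

lemma maxR_submenu_subset:
  assumes R: "weak_order X R" and "B \<subseteq> X" "A \<subseteq> B" "y \<in> A" "y \<in> maxR B R"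
  shows "maxR A R \<subseteq> maxR B R"
proof
  fix z assume "z \<in> maxR A R"
  then have "z \<in> B" "R z y" using assms(3,4) unfolding maxR_def by auto
  have "R z w" if "w \<in> B" for w
  proof (rule weak_order_trans[OF R _ _ _ \<open>R z y\<close>])
    show "R y w" using assms(5) that unfolding maxR_def by blast
  qed (use \<open>z \<in> B\<close> \<open>y \<in> A\<close> that assms(2,3) in blast)+
  then show "z \<in> maxR B R" using \<open>z \<in> B\<close> unfolding maxR_def by blast
qed

lemma mem_compromise_iff:
  "x \<in> compromise R L A \<longleftrightarrow>
     x \<in> maxR A R \<and> (maxR A R = {x} \<or> x \<noteq> minL (maxR A R) L)"
  unfolding compromise_def by auto

lemma compromise_beta:
  assumes R: "weak_order X R" and L: "linear_order_on' X L" and "finite X"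
    and "B \<subseteq> X" "A \<subseteq> B" "y \<in> A"
    and "x \<in> compromise R L A" and "y \<in> compromise R L B"
  shows "x \<in> compromise R L B"
proof -
  have x: "x \<in> maxR A R" "maxR A R = {x} \<or> x \<noteq> minL (maxR A R) L"
    and y: "y \<in> maxR B R" "maxR B R = {y} \<or> y \<noteq> minL (maxR B R) L"
    using assms(7,8) unfolding mem_compromise_iff by blast+
  have y_max_A: "y \<in> maxR A R"
    using y(1) \<open>A \<subseteq> B\<close> \<open>y \<in> A\<close> unfolding maxR_def by blast
  have sub: "maxR A R \<subseteq> maxR B R"
    using maxR_submenu_subset[OF R \<open>B \<subseteq> X\<close> \<open>A \<subseteq> B\<close> \<open>y \<in> A\<close> y(1)] .
  have "maxR B R = {x}" if x_min: "x = minL (maxR B R) L"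
  proof -
    have "maxR B R \<subseteq> X" using maxR_subset[of B R] \<open>B \<subseteq> X\<close> by blast
    moreover from this have "finite (maxR B R)" using \<open>finite X\<close> by (rule finite_subset)
    ultimately have "minL (maxR A R) L = x"
      using minL_subset_eq[OF L _ _ sub] x_min x(1) by simp
    then have "maxR A R = {x}" using x(2) by blast
    then have "y = x" using y_max_A by blast
    then show "maxR B R = {x}" using y(2) x_min by blast
  qed
  then show ?thesis unfolding mem_compromise_iff using x(1) sub by blast
qed

theorem minimal_compromise_rep_axiom_beta:
  assumes "finite X" "minimal_compromise_rep X c"
  shows "axiom_beta X c"
proof -
  obtain R L where "weak_order X R" "linear_order_on' X L"
    and c: "\<And>A. menu X A \<Longrightarrow> c A = compromise R L A"
    using assms(2) unfolding minimal_compromise_rep_iff by blast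
  then show ?thesis
    using compromise_beta[OF _ _ assms(1)] unfolding axiom_beta_def menu_def
    by (metis psubset_imp_subset)
qed

lemma choice_corr_compromise:
  assumes "finite X" "weak_order X R"
  shows "choice_corr X (compromise R L)"
  unfolding choice_corr_def
proof (intro allI impI conjI)
  fix A assume "menu X A"
  then have "A \<subseteq> X" "A \<noteq> {}" unfolding menu_def by blast+
  moreover from \<open>A \<subseteq> X\<close> have "finite A" using assms(1) by (rule finite_subset)
  ultimately have "maxR A R \<noteq> {}" using maxR_nonempty[OF assms(2)] by blast
  then show "compromise R L A \<noteq> {}"
    unfolding compromise_def by (metis Diff_eq_empty_iff subset_singleton_iff)
  show "compromise R L A \<subseteq> A"
    unfolding compromise_def using maxR_subset[of A R] by auto
qed

lemma weak_order_indifference: "weak_order X (\<lambda>_ _. True)"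
  unfolding weak_order_def by blast

lemma maxR_indifference: "maxR A (\<lambda>_ _. True) = A"
  unfolding maxR_def by blast

lemma linear_order_on'_ge: "linear_order_on' X ((\<ge>) :: 'a::linorder \<Rightarrow> 'a \<Rightarrow> bool)"
  unfolding linear_order_on'_def weak_order_def by auto

lemma minL_ge_eq_Min:
  fixes S :: "'a::linorder set"
  assumes "finite S" "S \<noteq> {}"
  shows "minL S (\<ge>) = Min S"
  using minL_eqI[OF linear_order_on'_ge subset_UNIV Min_in[OF assms]] assms by simp

theorem compromise_not_alpha:
  "\<exists>(Y :: nat set) d. finite Y \<and> choice_corr Y d \<and> minimal_compromise_rep Y d \<and>
     (\<exists>A B x. menu Y A \<and> menu Y B \<and> B \<subset> A \<and> x \<in> B \<and> x \<in> d A \<and> x \<notin> d B)"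
proof -
  let ?Y = "{0, 1, 2 :: nat}" and ?d = "compromise (\<lambda>_ _. True) ((\<ge>) :: nat \<Rightarrow> nat \<Rightarrow> bool)"
  have "minimal_compromise_rep ?Y ?d"
    using minimal_compromise_rep_compromise weak_order_indifference linear_order_on'_ge by blast
  moreover have "choice_corr ?Y ?d"
    by (simp add: choice_corr_compromise weak_order_indifference)
  moreover have "1 \<in> ?d ?Y"
  proof -
    have "\<nexists>x. ?Y = {x}" by auto
    moreover have "minL ?Y (\<ge>) = 0" by (simp add: minL_ge_eq_Min)
    ultimately show ?thesis unfolding compromise_def maxR_indifference by simp
  qed
  moreover have "1 \<notin> ?d {1, 2}"
  proof -
    have "\<nexists>x. {1, 2 :: nat} = {x}" by auto
    moreover have "minL {1, 2 :: nat} (\<ge>) = 1" by (simp add: minL_ge_eq_Min)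
    ultimately show ?thesis unfolding compromise_def maxR_indifference by simp
  qed
  moreover have "menu ?Y ?Y" "menu ?Y {1, 2}" unfolding menu_def by simp_all
  moreover have "{1, 2} \<subset> ?Y" by (simp add: psubset_insert_iff)
  ultimately show ?thesis
    by (intro exI[of _ ?Y] exI[of _ ?d] exI[of _ ?Y] exI[of _ "{1, 2}"] exI[of _ 1] conjI) simp_all
qed

theorem lemma1:
  fixes X :: "'a set" and c :: "'a set \<Rightarrow> 'a set"
  shows "(finite X \<and> choice_corr X c \<and> minimal_compromise_rep X c \<longrightarrow> axiom_beta X c) \<and>
         (\<exists>(Y :: nat set) d. finite Y \<and> choice_corr Y d \<and> minimal_compromise_rep Y d \<and>
            (\<exists>A B x. menu Y A \<and> menu Y B \<and> B \<subset> A \<and> x \<in> B \<and> x \<in> d A \<and> x \<notin> d B))"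
  using minimal_compromise_rep_axiom_beta compromise_not_alpha by blast

end
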